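(* Let $n_0>0$, $\alpha>0$, $P>0$. For each $T>0$ and integer $k\ge1$ let $\omega_k(T)>0$ be the unique positive solution of $2\arctan(\omega_k/\alpha)=k\pi-\omega_k T$, set $\lambda_k(T)=\frac{2\alpha P}{\alpha^2+\omega_k(T)^2}$ (the Mercer eigenvalues on $[0,T]$ of the kernel $Pe^{-\alpha|t_1-t_2|}$), and define $$I(T)=\frac12\sum_{k=1}^{\infty}\log\left(1+\frac{\lambda_k(T)}{n_0/2}\right).$$ Then the instantaneous finite-time rate at the origin satisfies $$C(0^+)=\frac{\partial I(T)}{\partial T}\Big|_{T=0^+}=\frac{P}{n_0}.$$
   Context: Setting: the transmitted signal is a zero-mean stationary Gaussian process with autocorrelation $Pe^{-\alpha|\tau|}$ observed on $[0,T]$ in additive white Gaussian noise of power spectral density $n_0/2$; $I(T)$ is the finite-time mutual information and $C(T)=I(T)/T$ the finite-time rate, with $C(0^+)$ its limit as $T\to0^+$, equal to the right derivative of $I$ at $T=0$ (where $I(0)=0$). Logarithms are natural. *)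

theory Defs
  imports "HOL-Analysis.Analysis"
begin

definition omega :: "real \<Rightarrow> nat \<Rightarrow> real \<Rightarrow> real" where
  "omega \<alpha> k T = (THE w. w > 0 \<and> 2 * arctan (w / \<alpha>) = real k * pi - w * T)"

definition eig :: "real \<Rightarrow> real \<Rightarrow> nat \<Rightarrow> real \<Rightarrow> real" where
  "eig P \<alpha> k T = 2 * \<alpha> * P / (\<alpha>^2 + (omega \<alpha> k T)^2)"

definition MI :: "real \<Rightarrow> real \<Rightarrow> real \<Rightarrow> real \<Rightarrow> real" where
  "MI n0 P \<alpha> T = 1/2 * (\<Sum>k. ln (1 + eig P \<alpha> (Suc k) T / (n0 / 2)))"

end

theory Submission
  imports Defs
begin

(*
  For k = 1 the defining equation becomes arctan (\<alpha> / \<omega>_1) = \<omega>_1 T / 2, and the elementary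
  bounds u / (1 + u^2) \<le> arctan u \<le> u squeeze \<lambda>_1(T) between 2 P T / (\<alpha> T + 2) and P T.
  For k \<ge> 2 one has \<omega>_k T \<ge> (k - 1) \<pi>, so \<lambda>_k(T) = O(T^2 / (k - 1)^2) and, by the Basel sum,
  all terms but the first contribute O(T^2) to I(T). Hence I(T) = P T / n0 + O(T^2).
*)

lemma arctan_ge_divide_one_plus_square:
  fixes u :: real
  assumes "0 \<le> u"
  shows "u / (1 + u\<^sup>2) \<le> arctan u"
proof -
  let ?h = "\<lambda>x::real. arctan x - x / (1 + x\<^sup>2)"
  have q: "0 < 1 + x\<^sup>2" for x :: real
    by (simp add: add_pos_nonneg)
  have "?h 0 \<le> ?h u"
  proof (rule DERIV_nonneg_imp_increasing_open[OF assms])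
    fix x :: real
    have "(?h has_real_derivative inverse (1 + x\<^sup>2) - (1 * (1 + x\<^sup>2) - x * (2 * x)) / (1 + x\<^sup>2)\<^sup>2) (at x)"
      using q[of x] by (auto intro!: derivative_eq_intros simp: power2_eq_square)
    also have "inverse (1 + x\<^sup>2) - (1 * (1 + x\<^sup>2) - x * (2 * x)) / (1 + x\<^sup>2)\<^sup>2 = 2 * x\<^sup>2 / (1 + x\<^sup>2)\<^sup>2"
      using q[of x] by (simp add: divide_simps) (simp add: algebra_simps power2_eq_square)
    finally show "\<exists>y. (?h has_real_derivative y) (at x) \<and> 0 \<le> y" by force
  next
    show "continuous_on {0..u} ?h"
      using q by (intro continuous_intros) (auto simp: less_imp_neq[symmetric])
  qed
  then show ?thesis by simp
qed

lemma ln_one_plus_ge_divide: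
  fixes y :: real
  assumes "0 \<le> y"
  shows "y / (1 + y) \<le> ln (1 + y)"
proof -
  have "ln (inverse (1 + y)) \<le> inverse (1 + y) - 1"
    using assms by (intro ln_le_minus_one) simp
  also have "\<dots> = - (y / (1 + y))"
    using assms by (simp add: field_simps)
  finally show ?thesis
    using assms by (simp add: ln_inverse)
qed

lemma suminf_le_head_plus_sums:
  fixes f g :: "nat \<Rightarrow> real"
  assumes "\<And>k. 0 \<le> f k" and "\<And>k. f (Suc k) \<le> g k" and "g sums s"
  shows "summable f" and "suminf f \<le> f 0 + s"
proof -
  have tail: "summable (\<lambda>k. f (Suc k))"
    using assms by (intro summable_comparison_test'[OF sums_summable[OF assms(3)]]) auto
  then show "summable f" by (simp add: summable_Suc_iff)
  have "(\<Sum>k. f (Suc k)) \<le> s"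
    by (rule sums_le[OF assms(2) summable_sums[OF tail] assms(3)])
  with \<open>summable f\<close> show "suminf f \<le> f 0 + s" by (simp add: suminf_split_head)
qed

lemma omega_equation_ex1:
  assumes \<alpha>: "\<alpha> > 0" and T: "T > 0" and k: "k \<ge> 1"
  shows "\<exists>!w. w > 0 \<and> 2 * arctan (w / \<alpha>) = real k * pi - w * T"
proof -
  define f where "f w = 2 * arctan (w / \<alpha>) + w * T" for w
  have f_mono: "strict_mono f"
    using \<alpha> T by (intro strict_monoI) (simp add: f_def arctan_less_iff divide_strict_right_mono add_strict_mono)
  have "isCont f w" for w
    unfolding f_def using \<alpha> by (intro continuous_intros) auto
  moreover have "f 0 \<le> real k * pi" and "real k * pi \<le> f (real k * pi / T)"
    using \<alpha> T k by (simp_all add: f_def)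
  ultimately obtain w where "0 \<le> w" and w: "f w = real k * pi"
    using IVT[of f 0 "real k * pi" "real k * pi / T"] k T by auto
  moreover have "w \<noteq> 0" using w k by (auto simp: f_def)
  ultimately have "w > 0 \<and> 2 * arctan (w / \<alpha>) = real k * pi - w * T"
    by (simp add: f_def algebra_simps)
  moreover have "v = w" if "2 * arctan (v / \<alpha>) = real k * pi - v * T" for v
    using strict_mono_eq[OF f_mono, of v w] that w by (simp add: f_def)
  ultimately show ?thesis by blast
qed

lemma omega:
  assumes "\<alpha> > 0" and "T > 0" and "k \<ge> 1"
  shows omega_pos: "omega \<alpha> k T > 0"
    and omega_equation: "2 * arctan (omega \<alpha> k T / \<alpha>) = real k * pi - omega \<alpha> k T * T"
  using theI'[OF omega_equation_ex1[OF assms]] by (simp_all add: omega_def)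

lemma arctan_alpha_div_omega_one:
  assumes \<alpha>: "\<alpha> > 0" and T: "T > 0"
  shows "arctan (\<alpha> / omega \<alpha> 1 T) = omega \<alpha> 1 T * T / 2"
proof -
  have w: "omega \<alpha> 1 T > 0" using omega_pos[OF \<alpha> T] by simp
  have "arctan (1 / (omega \<alpha> 1 T / \<alpha>)) = pi / 2 - arctan (omega \<alpha> 1 T / \<alpha>)"
    using arctan_inverse[of "omega \<alpha> 1 T / \<alpha>"] w \<alpha> by simp
  then show ?thesis
    using omega_equation[OF \<alpha> T, of 1] by simp
qed

lemma eig_nonneg:
  assumes "\<alpha> > 0" and "P > 0"
  shows "0 \<le> eig P \<alpha> k T"
  using assms by (simp add: eig_def add_pos_nonneg)

lemma eig_one_le:
  assumes \<alpha>: "\<alpha> > 0" and T: "T > 0" and P: "P > 0"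
  shows "eig P \<alpha> 1 T \<le> P * T"
proof -
  define w where "w = omega \<alpha> 1 T"
  have w: "w > 0" using omega_pos[OF \<alpha> T] by (simp add: w_def)
  have "\<alpha> * w / (\<alpha>\<^sup>2 + w\<^sup>2) = (\<alpha> / w) / (1 + (\<alpha> / w)\<^sup>2)"
    using w by (simp add: field_simps power2_eq_square)
  also have "\<dots> \<le> arctan (\<alpha> / w)"
    using \<alpha> w by (intro arctan_ge_divide_one_plus_square) simp
  also have "\<dots> = w * T / 2"
    using arctan_alpha_div_omega_one[OF \<alpha> T] by (simp add: w_def)
  finally have "w * (2 * \<alpha>) \<le> w * (T * (\<alpha>\<^sup>2 + w\<^sup>2))"
    using \<alpha> w by (simp add: field_simps add_pos_nonneg)
  then have "2 * \<alpha> \<le> T * (\<alpha>\<^sup>2 + w\<^sup>2)"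
    using w by simp
  then have "2 * \<alpha> * P \<le> P * T * (\<alpha>\<^sup>2 + w\<^sup>2)"
    using P by (metis less_imp_le mult.assoc mult.commute mult_left_mono)
  then show ?thesis
    using \<alpha> by (simp add: eig_def w_def pos_divide_le_eq add_pos_nonneg)
qed

lemma eig_one_ge:
  assumes \<alpha>: "\<alpha> > 0" and T: "T > 0" and P: "P > 0"
  shows "2 * P * T / (\<alpha> * T + 2) \<le> eig P \<alpha> 1 T"
proof -
  define w where "w = omega \<alpha> 1 T"
  have w: "w > 0" using omega_pos[OF \<alpha> T] by (simp add: w_def)
  have "w * T / 2 = arctan (\<alpha> / w)"
    using arctan_alpha_div_omega_one[OF \<alpha> T] by (simp add: w_def)
  also have "\<dots> \<le> \<alpha> / w"
    using \<alpha> w by (intro arctan_le_self) simp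
  finally have "T * w\<^sup>2 \<le> 2 * \<alpha>"
    using w by (simp add: field_simps power2_eq_square)
  then have "2 * P * T * (\<alpha>\<^sup>2 + w\<^sup>2) \<le> 2 * \<alpha> * P * (\<alpha> * T + 2)"
    using \<alpha> P by (simp add: algebra_simps power2_eq_square)
  then show ?thesis
    using \<alpha> T by (simp add: eig_def w_def field_simps add_pos_nonneg)
qed

lemma eig_Suc_le:
  assumes \<alpha>: "\<alpha> > 0" and T: "T > 0" and P: "P > 0" and k: "k \<ge> 1"
  shows "eig P \<alpha> (Suc k) T \<le> 2 * \<alpha> * P * T\<^sup>2 / (pi\<^sup>2 * (real k)\<^sup>2)"
proof -
  define w where "w = omega \<alpha> (Suc k) T"
  have "arctan (w / \<alpha>) < pi / 2" by (rule arctan_ubound)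
  then have "pi * real k / T \<le> w"
    using omega_equation[OF \<alpha> T, of "Suc k"] T by (simp add: w_def field_simps)
  moreover have pos: "0 < pi * real k / T"
    using k T by simp
  ultimately have "(pi * real k / T)\<^sup>2 \<le> \<alpha>\<^sup>2 + w\<^sup>2"
    by (smt (verit) power_mono zero_le_power2)
  then have "eig P \<alpha> (Suc k) T \<le> 2 * \<alpha> * P / (pi * real k / T)\<^sup>2"
    unfolding eig_def w_def using \<alpha> P k pos by (intro divide_left_mono) (auto intro!: mult_pos_pos add_pos_nonneg)
  also have "\<dots> = 2 * \<alpha> * P * T\<^sup>2 / (pi\<^sup>2 * (real k)\<^sup>2)"
    by (simp add: power_divide power_mult_distrib)
  finally show ?thesis .
qed

lemma MI_series_le:
  assumes n0: "n0 > 0" and \<alpha>: "\<alpha> > 0" and T: "T > 0" and P: "P > 0"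
  shows "summable (\<lambda>k. ln (1 + eig P \<alpha> (Suc k) T / (n0 / 2)))"
    and "(\<Sum>k. ln (1 + eig P \<alpha> (Suc k) T / (n0 / 2)))
           \<le> ln (1 + eig P \<alpha> 1 T / (n0 / 2)) + 2 * \<alpha> * P * T\<^sup>2 / (3 * n0)"
proof -
  define c where "c = 4 * \<alpha> * P * T\<^sup>2 / (n0 * pi\<^sup>2)"
  have eig_div: "0 \<le> eig P \<alpha> k T / (n0 / 2)" for k
    using eig_nonneg[OF \<alpha> P] n0 by simp
  have "(\<lambda>k. c * (1 / real ((k + 1)\<^sup>2))) sums (c * (pi\<^sup>2 / 6))"
    by (intro sums_mult inverse_squares_sums)
  also have "c * (pi\<^sup>2 / 6) = 2 * \<alpha> * P * T\<^sup>2 / (3 * n0)"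
    by (simp add: c_def field_simps)
  finally have sums: "(\<lambda>k. c * (1 / real ((k + 1)\<^sup>2))) sums (2 * \<alpha> * P * T\<^sup>2 / (3 * n0))" .
  have tail: "ln (1 + eig P \<alpha> (Suc (Suc k)) T / (n0 / 2)) \<le> c * (1 / real ((k + 1)\<^sup>2))" for k
  proof -
    have "ln (1 + eig P \<alpha> (Suc (Suc k)) T / (n0 / 2)) \<le> eig P \<alpha> (Suc (Suc k)) T / (n0 / 2)"
      using eig_div by (rule ln_add_one_self_le_self)
    also have "\<dots> \<le> (2 * \<alpha> * P * T\<^sup>2 / (pi\<^sup>2 * (real (Suc k))\<^sup>2)) / (n0 / 2)"
      using eig_Suc_le[OF \<alpha> T P, of "Suc k"] n0 by (intro divide_right_mono) auto
    also have "\<dots> = c * (1 / real ((k + 1)\<^sup>2))"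
      by (simp add: c_def field_simps)
    finally show ?thesis .
  qed
  show "summable (\<lambda>k. ln (1 + eig P \<alpha> (Suc k) T / (n0 / 2)))"
    using suminf_le_head_plus_sums(1)[OF _ tail sums] eig_div by simp
  show "(\<Sum>k. ln (1 + eig P \<alpha> (Suc k) T / (n0 / 2)))
          \<le> ln (1 + eig P \<alpha> 1 T / (n0 / 2)) + 2 * \<alpha> * P * T\<^sup>2 / (3 * n0)"
    using suminf_le_head_plus_sums(2)[OF _ tail sums] eig_div by simp
qed

lemma MI_ge:
  assumes n0: "n0 > 0" and \<alpha>: "\<alpha> > 0" and T: "T > 0" and P: "P > 0"
  shows "2 * P * T / (n0 * (\<alpha> * T + 2) + 4 * P * T) \<le> MI n0 P \<alpha> T"
proof -
  define D where "D = n0 * (\<alpha> * T + 2)"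
  have D: "0 < D"
    using n0 \<alpha> T by (simp add: D_def add_pos_pos)
  define y where "y = 4 * P * T / D"
  have y: "0 \<le> y"
    using D P T by (simp add: y_def)
  have y_le: "y \<le> eig P \<alpha> 1 T / (n0 / 2)"
  proof -
    have "y = (2 * P * T / (\<alpha> * T + 2)) / (n0 / 2)"
      using n0 by (simp add: y_def D_def field_simps)
    also have "\<dots> \<le> eig P \<alpha> 1 T / (n0 / 2)"
      using eig_one_ge[OF \<alpha> T P] n0 by (intro divide_right_mono) auto
    finally show ?thesis .
  qed
  have "2 * P * T / (D + 4 * P * T) = 1/2 * (y / (1 + y))"
    using D P T by (simp add: y_def field_simps add_pos_pos)
  also have "\<dots> \<le> 1/2 * ln (1 + y)"
    by (rule mult_left_mono[OF ln_one_plus_ge_divide[OF y]]) simp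
  also have "\<dots> \<le> 1/2 * ln (1 + eig P \<alpha> 1 T / (n0 / 2))"
    using y y_le by simp
  also have "\<dots> \<le> MI n0 P \<alpha> T"
    unfolding MI_def
    using sum_le_suminf[OF MI_series_le(1)[OF assms], of "{0}"] eig_nonneg[OF \<alpha> P] n0 by simp
  finally show ?thesis
    by (simp add: D_def)
qed

lemma MI_le:
  assumes n0: "n0 > 0" and \<alpha>: "\<alpha> > 0" and T: "T > 0" and P: "P > 0"
  shows "MI n0 P \<alpha> T \<le> P * T / n0 + \<alpha> * P * T\<^sup>2 / (3 * n0)"
proof -
  have "ln (1 + eig P \<alpha> 1 T / (n0 / 2)) \<le> eig P \<alpha> 1 T / (n0 / 2)"
    using eig_nonneg[OF \<alpha> P] n0 by (intro ln_add_one_self_le_self) simp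
  also have "\<dots> \<le> P * T / (n0 / 2)"
    using eig_one_le[OF \<alpha> T P] n0 by (simp add: divide_right_mono)
  finally show ?thesis
    using MI_series_le(2)[OF assms] n0 unfolding MI_def by (simp add: field_simps)
qed

theorem theorem3:
  fixes n0 \<alpha> P :: real
  assumes "n0 > 0" and "\<alpha> > 0" and "P > 0"
  shows "((\<lambda>T. MI n0 P \<alpha> T / T) \<longlongrightarrow> P / n0) (at_right 0)"
proof (rule tendsto_sandwich)
  show "\<forall>\<^sub>F T in at_right 0. 2 * P / (n0 * (\<alpha> * T + 2) + 4 * P * T) \<le> MI n0 P \<alpha> T / T"
    using eventually_at_right_less
  proof eventually_elim
    case (elim T)
    then show ?case
      using MI_ge[OF assms(1,2) elim assms(3)] by (simp add: pos_le_divide_eq)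
  qed
  show "\<forall>\<^sub>F T in at_right 0. MI n0 P \<alpha> T / T \<le> P / n0 + \<alpha> * P * T / (3 * n0)"
    using eventually_at_right_less
  proof eventually_elim
    case (elim T)
    have "MI n0 P \<alpha> T \<le> (P / n0 + \<alpha> * P * T / (3 * n0)) * T"
      using MI_le[OF assms(1,2) elim assms(3)] by (simp add: algebra_simps power2_eq_square)
    then show ?case
      using elim by (simp add: pos_divide_le_eq)
  qed
  show "((\<lambda>T. 2 * P / (n0 * (\<alpha> * T + 2) + 4 * P * T)) \<longlongrightarrow> P / n0) (at_right 0)"
    using assms by (auto intro!: tendsto_eq_intros)
  show "((\<lambda>T. P / n0 + \<alpha> * P * T / (3 * n0)) \<longlongrightarrow> P / n0) (at_right 0)"
    using assms by (auto intro!: tendsto_eq_intros)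
qed

end
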